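(* There exists a function assigning to each real $x \geq 1$ a positive integer $m = m(x)$ such that: (i) $\varphi(m) \leq x$; (ii) $m = 2^t Q$, where $t \geq 0$ is an integer and $Q$ is an odd squarefree positive integer; and (iii) \[ m(x) \geq \left(\tfrac{1}{2} e^{\gamma} + o(1)\right) x \log\log x \quad \text{as } x \to +\infty, \] i.e., $\liminf_{x\to+\infty} m(x)/(x\log\log x) \geq \tfrac12 e^{\gamma}$.
   Context: $\varphi$ denotes Euler's totient function and $\gamma$ is the Euler--Mascheroni constant. $\log$ is the natural logarithm. *)

theory Defs
  imports "HOL-Analysis.Analysis" "HOL-Number_Theory.Number_Theory" "HOL-Computational_Algebra.Squarefree"
begin

end

theory Submission
  imports Defs "HOL-Real_Asymp.Real_Asymp"
begin

text \<open>
  Let \<open>y = \<lfloor>ln x / ln (ln x)\<rfloor>\<close>, so that \<open>y ^ y \<le> x\<close>. The product of \<open>p - 1\<close> over the odd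
  primes \<open>p \<le> y\<close> is then at most \<open>x\<close>. Multiplying it by a power of two and cancelling at
  most one factor \<open>p - 1 = g\<close>, with \<open>g\<close> from a fixed list of nine numbers, brings it into
  \<open>[9x/10, x]\<close>; it is then \<open>\<phi>(m)\<close> for \<open>m = 2 ^ (j + 1) * Q\<close>, \<open>Q\<close> the product of the remaining
  odd primes. The ratio \<open>m / \<phi>(m)\<close>, twice the product of \<open>p / (p - 1)\<close> over the primes of \<open>Q\<close>,
  is at least \<open>130/131\<close> times the Euler product \<open>\<Prod>p \<le> y. p / (p - 1)\<close>, which dominates the
  harmonic sum \<open>\<ge> ln (y + 1)\<close>. Hence \<open>m \<ge> (117/131) x ln (y + 1) \<sim> (117/131) x ln (ln x)\<close>,
  and \<open>117/131 > e\<^sup>\<gamma>/2\<close>.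
\<close>

lemma sum_power_inverse_le:
  fixes q :: real
  assumes "q > 1"
  shows "(\<Sum>k<M. (1 / q) ^ k) \<le> q / (q - 1)"
proof -
  have "(\<Sum>k<M. (1 / q) ^ k) = (1 - (1 / q) ^ M) / (1 - 1 / q)"
    using assms sum_gp_strict[of "1 / q" M] by auto
  also have "\<dots> \<le> 1 / (1 - 1 / q)"
    using assms by (intro divide_right_mono) (auto simp: field_simps)
  also have "\<dots> = q / (q - 1)"
    using assms by (simp add: field_simps)
  finally show ?thesis .
qed

lemma prime_factors_div_multiplicity:
  fixes n p :: nat
  assumes "prime p" "n > 0"
  shows "n div p ^ multiplicity p n > 0"
    and "prime_factors (n div p ^ multiplicity p n) \<subseteq> prime_factors n - {p}"
proof -
  have n_eq: "n = p ^ multiplicity p n * (n div p ^ multiplicity p n)"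
    using multiplicity_dvd[of p n] by simp
  then show "n div p ^ multiplicity p n > 0"
    using assms(2) by (metis gr0I mult_0_right)
  show "prime_factors (n div p ^ multiplicity p n) \<subseteq> prime_factors n - {p}"
  proof
    fix q assume q: "q \<in> prime_factors (n div p ^ multiplicity p n)"
    then have "q \<in> prime_factors n"
      using assms(2) dvd_triv_right[of "n div p ^ multiplicity p n" "p ^ multiplicity p n"] n_eq
      by (auto simp: in_prime_factors_iff intro: dvd_trans)
    moreover have "q \<noteq> p"
      using q multiplicity_decompose[of n p] assms prime_gt_1_nat[OF assms(1)]
      by (auto simp: in_prime_factors_iff)
    ultimately show "q \<in> prime_factors n - {p}"
      by blast
  qed
qed

lemma sum_inverse_smooth_le_prod:
  assumes "finite A" "\<forall>p\<in>A. prime p" "finite N" "\<forall>n\<in>N. n > 0 \<and> prime_factors n \<subseteq> A"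
  shows "(\<Sum>n\<in>N. 1 / real n) \<le> (\<Prod>p\<in>A. real p / (real p - 1))"
  using assms
proof (induction A arbitrary: N rule: finite_induct)
  case empty
  then have "N \<subseteq> {1}"
    by (auto simp: prime_factorization_empty_iff)
  then have "(\<Sum>n\<in>N. 1 / real n) \<le> (\<Sum>n\<in>{1}. 1 / real n)"
    by (intro sum_mono2) auto
  then show ?case by simp
next
  case (insert p A)
  have p: "prime p" "real p > 1"
    using insert.prems prime_gt_1_nat by auto
  define v where "v n = multiplicity p n" for n
  define r where "r n = n div p ^ v n" for n
  define R where "R = r ` N"
  have n_eq: "n = p ^ v n * r n" for n
    unfolding r_def v_def using multiplicity_dvd[of p n] by simp
  have r_smooth: "r n > 0 \<and> prime_factors (r n) \<subseteq> A" if "n \<in> N" for n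
    using prime_factors_div_multiplicity[OF p(1), of n] insert.prems that unfolding r_def v_def
    by auto
  obtain M where M: "v ` N \<subseteq> {..<M}"
    using insert.prems(2) finite_nat_iff_bounded by (meson finite_imageI)
  have inj: "inj_on (\<lambda>n. (v n, r n)) N"
    using n_eq by (intro inj_onI) (metis prod.inject)
  have "(\<Sum>n\<in>N. 1 / real n) = (\<Sum>(k, s)\<in>(\<lambda>n. (v n, r n)) ` N. (1 / real p) ^ k * (1 / real s))"
    by (subst sum.reindex[OF inj]) (auto intro!: sum.cong simp: power_one_over
        simp flip: of_nat_power of_nat_mult n_eq)
  also have "\<dots> \<le> (\<Sum>(k, s)\<in>{..<M} \<times> R. (1 / real p) ^ k * (1 / real s))"
    using M insert.prems(2) unfolding R_def by (intro sum_mono2) auto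
  also have "\<dots> = (\<Sum>k<M. (1 / real p) ^ k) * (\<Sum>s\<in>R. 1 / real s)"
    by (simp add: sum_product sum.cartesian_product)
  also have "\<dots> \<le> real p / (real p - 1) * (\<Prod>q\<in>A. real q / (real q - 1))"
  proof (intro mult_mono)
    show "(\<Sum>s\<in>R. 1 / real s) \<le> (\<Prod>q\<in>A. real q / (real q - 1))"
      using insert r_smooth unfolding R_def by auto
  qed (use sum_power_inverse_le[OF p(2)] p(2) in \<open>auto intro: sum_nonneg\<close>)
  also have "\<dots> = (\<Prod>q\<in>insert p A. real q / (real q - 1))"
    using insert.hyps by simp
  finally show ?case .
qed

lemma ln_le_prod_primes_upto:
  "ln (real y + 1) \<le> (\<Prod>p | prime p \<and> p \<le> y. real p / (real p - 1))"
proof -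
  have "ln (real y + 1) \<le> harm y"
    by (rule harm_ge_ln)
  also have "\<dots> = (\<Sum>n\<in>{1..y}. 1 / real n)"
    by (simp add: harm_def inverse_eq_divide)
  also have "\<dots> \<le> (\<Prod>p | prime p \<and> p \<le> y. real p / (real p - 1))"
  proof (rule sum_inverse_smooth_le_prod)
    show "\<forall>n\<in>{1..y}. n > 0 \<and> prime_factors n \<subseteq> {p. prime p \<and> p \<le> y}"
      by (auto simp: in_prime_factors_iff intro: order_trans[OF dvd_imp_le])
  qed auto
  finally show ?thesis .
qed

lemma totient_prod_primes:
  assumes "finite B" "\<forall>p\<in>B. prime p"
  shows "totient (\<Prod>B) = (\<Prod>p\<in>B. p - 1)"
proof -
  have "totient (\<Prod>B) = (\<Prod>p\<in>B. totient p)"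
    using assms by (intro totient_prod_coprime[of id B, simplified]) (auto simp: pairwise_def primes_coprime)
  then show ?thesis
    using assms by (simp add: totient_prime)
qed

lemma squarefree_prod_primes:
  assumes "\<forall>p\<in>B. prime (p :: nat)"
  shows "squarefree (\<Prod>B)"
  using assms by (intro squarefree_prod_coprime) (auto simp: primes_coprime squarefree_prime)

lemma prime_nat_by_trial_division:
  fixes p k :: nat
  assumes "p > 1" "\<forall>d\<in>set [2..<Suc k]. \<not> d dvd p" "p < Suc k * Suc k"
  shows "prime p"
  unfolding prime_nat_iff'
proof (intro conjI ballI notI)
  show "p > 1" by fact
  fix n assume n: "n \<in> {2..<p}" "n dvd p"
  then obtain m where m: "p = n * m" by blast
  have no_small_divisor: "\<not> d dvd p" if "2 \<le> d" "d \<le> k" for d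
    using assms(2) that by auto
  have "m \<ge> 2"
    using m n by (cases m) auto
  moreover have "m dvd p"
    using m by simp
  ultimately have "k < n" "k < m"
    using n no_small_divisor[of n] no_small_divisor[of m] by force+
  then have "Suc k * Suc k \<le> p"
    unfolding m by (intro mult_mono) auto
  then show False
    using assms(3) by simp
qed

text \<open>
  Each \<open>g > 1\<close> here has \<open>g + 1\<close> prime, and consecutive members of
  \<open>128, 138, 148, \<dots>, 240, 256\<close> differ by a factor at most \<open>10/9\<close>; hence some \<open>2 ^ j / g\<close>
  lies in every window \<open>[9z/10, z]\<close>.
\<close>

definition special_denominators :: "nat set" where
  "special_denominators = {1, 138, 148, 162, 178, 192, 210, 226, 240}"

lemma prime_Suc_special_denominators:
  assumes "g \<in> special_denominators" "g \<noteq> 1"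
  shows "prime (g + 1)"
proof -
  have "q \<in> {139, 149, 163, 179, 193, 211, 227, 241} \<Longrightarrow> prime q" for q :: nat
    by (elim insertE emptyE; simp only:; rule prime_nat_by_trial_division[where k = 15];
        simp add: upt_rec)
  moreover have "g + 1 \<in> {139, 149, 163, 179, 193, 211, 227, 241}"
    using assms by (auto simp: special_denominators_def)
  ultimately show ?thesis
    by blast
qed

lemma exists_power_of_two_window:
  fixes z :: real
  assumes "z \<ge> 1"
  obtains k :: nat where "2 ^ k \<le> z" "z < 2 * 2 ^ k"
proof -
  have "\<exists>k. \<not> z < 2 ^ k \<and> z < 2 ^ Suc k"
    using assms real_arch_pow[of 2 z] by (intro exists_least_lemma) auto
  then show ?thesis
    using that by (auto simp: not_less)
qed

lemma special_dyadic_window: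
  fixes z :: real
  assumes "z \<ge> 1"
  shows "\<exists>g\<in>special_denominators. \<exists>j::nat. 9/10 * z \<le> 2 ^ j / real g \<and> 2 ^ j / real g \<le> z"
proof -
  obtain k :: nat where k: "2 ^ k \<le> z" "z < 2 * 2 ^ k"
    using exists_power_of_two_window[OF assms] .
  define P :: real where "P = 2 ^ k"
  have window: "\<exists>j::nat. 9/10 * z \<le> 2 ^ j / real g \<and> 2 ^ j / real g \<le> z"
    if "256 / real g * P \<le> z" "z \<le> 2560 / (9 * real g) * P" "g > 0" for g :: nat
  proof (intro exI conjI)
    have "(2::real) ^ (k + 8) / real g = 256 / real g * P"
      unfolding P_def by (simp add: power_add)
    then show "9/10 * z \<le> 2 ^ (k + 8) / real g" "2 ^ (k + 8) / real g \<le> z"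
      using that by (auto simp: field_simps)
  qed
  have "z \<le> 10/9 * P \<or> (\<exists>g\<in>special_denominators - {1}.
          256 / real g * P \<le> z \<and> z \<le> 2560 / (9 * real g) * P)"
    using k unfolding P_def special_denominators_def by simp linarith
  then show ?thesis
  proof
    assume "z \<le> 10/9 * P"
    then have "9/10 * z \<le> 2 ^ k / real (1::nat) \<and> 2 ^ k / real (1::nat) \<le> z"
      using k unfolding P_def by simp
    then show ?thesis
      by (auto simp: special_denominators_def)
  next
    assume "\<exists>g\<in>special_denominators - {1}. 256 / real g * P \<le> z \<and> z \<le> 2560 / (9 * real g) * P"
    then obtain g where "g \<in> special_denominators" "g \<noteq> 1"
      "256 / real g * P \<le> z" "z \<le> 2560 / (9 * real g) * P"
      by blast
    moreover have "g > 0"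
      using \<open>g \<in> special_denominators\<close> by (auto simp: special_denominators_def)
    ultimately show ?thesis
      using window by blast
  qed
qed

lemma remove_special_prime:
  assumes "finite A" "\<forall>p\<in>A. prime p" "g \<in> special_denominators"
    and "\<forall>h\<in>special_denominators - {1}. h + 1 \<in> A"
  obtains B where "B \<subseteq> A"
    "(\<Prod>p\<in>A. real p - 1) = real g * (\<Prod>p\<in>B. real p - 1)"
    "(\<Prod>p\<in>A. real p / (real p - 1)) \<le> 131/130 * (\<Prod>p\<in>B. real p / (real p - 1))"
proof (cases "g = 1")
  case True
  have "(\<Prod>p\<in>A. real p / (real p - 1)) \<ge> 0"
    using assms(2) prime_gt_1_nat by (intro prod_nonneg) (auto simp: less_imp_le)
  then show ?thesis
    using that[of A] True by simp
next
  case False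
  define B where "B = A - {g + 1}"
  have "g + 1 \<in> A" "g \<ge> 138"
    using assms False by (auto simp: special_denominators_def)
  have "(\<Prod>p\<in>A. real p - 1) = real g * (\<Prod>p\<in>B. real p - 1)"
    using \<open>g + 1 \<in> A\<close> assms(1) unfolding B_def by (simp add: prod.remove)
  moreover have "(\<Prod>p\<in>A. real p / (real p - 1)) \<le> 131/130 * (\<Prod>p\<in>B. real p / (real p - 1))"
  proof -
    have "(\<Prod>p\<in>B. real p / (real p - 1)) \<ge> 0"
      using assms(2) prime_gt_1_nat unfolding B_def by (intro prod_nonneg) (auto simp: less_imp_le)
    then have "(real g + 1) / real g * (\<Prod>p\<in>B. real p / (real p - 1))
        \<le> 131/130 * (\<Prod>p\<in>B. real p / (real p - 1))"
      using \<open>g \<ge> 138\<close> by (intro mult_right_mono) (simp_all add: field_simps)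
    moreover have "(\<Prod>p\<in>A. real p / (real p - 1)) = (real g + 1) / real g * (\<Prod>p\<in>B. real p / (real p - 1))"
      using \<open>g + 1 \<in> A\<close> assms(1) unfolding B_def by (simp add: prod.remove)
    ultimately show ?thesis
      by simp
  qed
  ultimately show ?thesis
    using that[of B] unfolding B_def by blast
qed

definition admissible :: "real \<Rightarrow> nat \<Rightarrow> bool" where
  "admissible x m \<longleftrightarrow> m > 0 \<and> real (totient m) \<le> x \<and>
     (\<exists>t Q :: nat. m = 2 ^ t * Q \<and> odd Q \<and> squarefree Q \<and> Q > 0)"

lemma admissible_one: "x \<ge> 1 \<Longrightarrow> admissible x 1"
  unfolding admissible_def by (intro conjI exI[of _ 0] exI[of _ 1]) auto

lemma two_power_mult_prod_odd_primes:
  fixes j :: nat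
  assumes "finite B" "\<forall>p\<in>B. prime p \<and> odd p"
  defines "m \<equiv> 2 ^ Suc j * \<Prod>B"
  shows totient_two_power_mult_prod_odd_primes: "real (totient m) = 2 ^ j * (\<Prod>p\<in>B. real p - 1)"
    and two_power_mult_prod_odd_primes_eq: "real m = 2 * (\<Prod>p\<in>B. real p / (real p - 1)) * real (totient m)"
    and admissible_two_power_mult_prod_odd_primes: "real (totient m) \<le> x \<Longrightarrow> admissible x m"
proof -
  have "odd (\<Prod>B)"
    using assms by (simp add: even_prod_iff)
  then have "coprime (2 ^ Suc j) (\<Prod>B)"
    by simp
  moreover have "totient (2 ^ Suc j) = 2 ^ j"
    using totient_prime_power_Suc[of 2 j] by simp
  ultimately have "totient m = 2 ^ j * (\<Prod>p\<in>B. p - 1)"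
    using assms by (simp add: totient_mult_coprime totient_prod_primes)
  moreover have "(\<Prod>p\<in>B. real (p - 1)) = (\<Prod>p\<in>B. real p - 1)"
    using assms prime_ge_1_nat by (intro prod.cong) (auto simp: of_nat_diff)
  ultimately show tot: "real (totient m) = 2 ^ j * (\<Prod>p\<in>B. real p - 1)"
    by (simp add: of_nat_prod)
  have "(\<Prod>p\<in>B. real p) = (\<Prod>p\<in>B. real p / (real p - 1)) * (\<Prod>p\<in>B. real p - 1)"
    unfolding prod.distrib[symmetric] using assms(2) prime_gt_1_nat by (intro prod.cong) auto
  then show "real m = 2 * (\<Prod>p\<in>B. real p / (real p - 1)) * real (totient m)"
    unfolding tot by (simp add: m_def of_nat_prod)
  have "squarefree (\<Prod>B)"
    using assms(2) by (intro squarefree_prod_primes) auto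
  moreover have "m = 2 ^ Suc j * \<Prod>B" "m > 0"
    using odd_pos[OF \<open>odd (\<Prod>B)\<close>] by (simp_all add: m_def)
  ultimately show "real (totient m) \<le> x \<Longrightarrow> admissible x m"
    unfolding admissible_def using \<open>odd (\<Prod>B)\<close> odd_pos by blast
qed

lemma exists_admissible_prod_primes_bound:
  assumes "finite A" "\<forall>p\<in>A. prime p \<and> odd p" "\<forall>g\<in>special_denominators - {1}. g + 1 \<in> A"
    and "(\<Prod>p\<in>A. real p - 1) \<le> x"
  shows "\<exists>m. admissible x m \<and> 234/131 * x * (\<Prod>p\<in>A. real p / (real p - 1)) \<le> real m"
proof -
  define \<Phi> where "\<Phi> = (\<Prod>p\<in>A. real p - 1)"
  have "\<Phi> > 0"
    using assms(2) prime_gt_1_nat unfolding \<Phi>_def by (intro prod_pos) auto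
  then obtain g j where g: "g \<in> special_denominators"
    and j: "9/10 * (x / \<Phi>) \<le> 2 ^ j / real g" "2 ^ j / real g \<le> x / \<Phi>"
    using special_dyadic_window[of "x / \<Phi>"] assms(4) unfolding \<Phi>_def by auto
  obtain B where B: "B \<subseteq> A" "\<Phi> = real g * (\<Prod>p\<in>B. real p - 1)"
    "(\<Prod>p\<in>A. real p / (real p - 1)) \<le> 131/130 * (\<Prod>p\<in>B. real p / (real p - 1))"
    using remove_special_prime[OF assms(1) _ g assms(3)] assms(2) unfolding \<Phi>_def by blast
  have finB: "finite B" and primeB: "\<forall>p\<in>B. prime p \<and> odd p"
    using B(1) assms(1,2) by (auto intro: finite_subset)
  define m where "m = 2 ^ Suc j * \<Prod>B"
  define R where "R = (\<Prod>p\<in>B. real p / (real p - 1))"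
  have "R \<ge> 0"
    using primeB prime_gt_1_nat unfolding R_def by (intro prod_nonneg) (auto simp: less_imp_le)
  have "g > 0"
    using g by (auto simp: special_denominators_def)
  then have tot: "real (totient m) = 2 ^ j / real g * \<Phi>"
    using totient_two_power_mult_prod_odd_primes[OF finB primeB] B(2) unfolding m_def by simp
  have "real (totient m) \<le> x"
    using j(2) \<open>\<Phi> > 0\<close> unfolding tot by (simp add: field_simps)
  then have "admissible x m"
    using admissible_two_power_mult_prod_odd_primes[OF finB primeB] by (simp add: m_def)
  have "x \<ge> 0"
    using \<open>\<Phi> > 0\<close> assms(4) unfolding \<Phi>_def by linarith
  then have "234/131 * x * (\<Prod>p\<in>A. real p / (real p - 1)) \<le> 234/131 * x * (131/130 * R)"
    using B(3) unfolding R_def by (intro mult_left_mono) auto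
  also have "\<dots> = 2 * R * (9/10 * x)"
    by simp
  also have "\<dots> \<le> 2 * R * real (totient m)"
    using j(1) \<open>\<Phi> > 0\<close> \<open>R \<ge> 0\<close> unfolding tot by (intro mult_left_mono) (simp_all add: field_simps)
  also have "\<dots> = real m"
    using two_power_mult_prod_odd_primes_eq[OF finB primeB] unfolding m_def R_def by simp
  finally show ?thesis
    using \<open>admissible x m\<close> by blast
qed

lemma exists_admissible_ln_bound:
  assumes "241 \<le> y" "real y ^ y \<le> x"
  shows "\<exists>m. admissible x m \<and> 117/131 * x * ln (real y + 1) \<le> real m"
proof -
  define A where "A = {p. prime p \<and> odd p \<and> p \<le> y}"
  have "finite A"
    unfolding A_def by (rule finite_subset[of _ "{..y}"]) auto
  have special: "\<forall>g\<in>special_denominators - {1}. g + 1 \<in> A"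
    using assms(1) prime_Suc_special_denominators unfolding A_def
    by (auto simp: special_denominators_def)
  have "(\<Prod>p\<in>A. real p - 1) \<le> (\<Prod>p\<in>A. real y)"
    by (intro prod_mono) (auto simp: A_def dest: prime_gt_1_nat)
  also have "\<dots> \<le> real y ^ y"
  proof -
    have "A \<subseteq> {1..y}"
      by (auto simp: A_def dest: prime_gt_0_nat)
    then have "card A \<le> y"
      using card_mono[of "{1..y}" A] by simp
    then show ?thesis
      using assms(1) by (simp add: power_increasing)
  qed
  also have "\<dots> \<le> x"
    by (fact assms(2))
  finally obtain m where m: "admissible x m" "234/131 * x * (\<Prod>p\<in>A. real p / (real p - 1)) \<le> real m"
    using exists_admissible_prod_primes_bound[OF \<open>finite A\<close> _ special] unfolding A_def by blast
  have "p = 2 \<or> odd p" if "prime p" for p :: nat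
    using prime_odd_nat[OF that] prime_ge_2_nat[OF that] by force
  then have "{p. prime p \<and> p \<le> y} = insert 2 A"
    using assms(1) by (auto simp: A_def)
  then have "ln (real y + 1) \<le> 2 * (\<Prod>p\<in>A. real p / (real p - 1))"
    using ln_le_prod_primes_upto[of y] \<open>finite A\<close> by (simp add: A_def)
  moreover have "x \<ge> 0"
    by (rule order_trans[OF zero_le_power assms(2)]) simp
  ultimately have "117/131 * x * ln (real y + 1) \<le> 117/131 * x * (2 * (\<Prod>p\<in>A. real p / (real p - 1)))"
    by (intro mult_left_mono) auto
  also have "\<dots> \<le> real m"
    using m(2) by simp
  finally show ?thesis
    using m(1) by blast
qed

lemma floor_ln_div_ln_ln_bounds:
  fixes x :: real
  assumes "exp (exp 1) \<le> x" "y = nat \<lfloor>ln x / ln (ln x)\<rfloor>" "y > 0"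
  shows "real y ^ y \<le> x" "ln (ln x) - ln (ln (ln x)) \<le> ln (real y + 1)"
proof -
  define L where "L = ln x"
  have "x > 0"
    using assms(1) exp_gt_zero[of "exp 1"] by linarith
  then have "exp 1 \<le> L"
    using assms(1) ln_le_cancel_iff[of "exp (exp 1)" x] unfolding L_def by simp
  moreover have "exp 1 > (1::real)"
    by simp
  ultimately have "L > 1" "L > 0"
    by linarith+
  then have "1 \<le> ln L"
    using \<open>exp 1 \<le> L\<close> ln_le_cancel_iff[of "exp 1" L] by simp
  have "real y = of_int \<lfloor>L / ln L\<rfloor>"
    using assms(2,3) unfolding L_def by simp
  then have y: "real y \<le> L / ln L" "L / ln L < real y + 1"
    by linarith+
  have "L / ln L \<le> L"
    using divide_left_mono[of 1 "ln L" L] \<open>L > 1\<close> \<open>1 \<le> ln L\<close> by simp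
  then have "ln (real y) \<le> ln L"
    using y(1) assms(3) by simp
  have "ln (real y ^ y) = real y * ln (real y)"
    using assms(3) by (simp add: ln_realpow)
  also have "\<dots> \<le> L / ln L * ln L"
    using y(1) \<open>ln (real y) \<le> ln L\<close> assms(3) by (intro mult_mono) auto
  also have "\<dots> = ln x"
    using \<open>1 \<le> ln L\<close> unfolding L_def by simp
  finally show "real y ^ y \<le> x"
    using \<open>x > 0\<close> assms(3) by simp
  have "ln (L / ln L) \<le> ln (real y + 1)"
    using y(2) \<open>L > 1\<close> \<open>1 \<le> ln L\<close> by (intro ln_mono) (auto intro!: divide_pos_pos)
  moreover have "ln (L / ln L) = ln L - ln (ln L)"
    using \<open>L > 1\<close> by (intro ln_divide_pos) auto
  ultimately show "ln (ln x) - ln (ln (ln x)) \<le> ln (real y + 1)"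
    unfolding L_def by linarith
qed

lemma exists_admissible_ln_ln_bound:
  fixes x :: real
  assumes "exp (exp 1) \<le> x" "242 \<le> ln x / ln (ln x)"
  shows "\<exists>m. admissible x m \<and> 117/131 * x * (ln (ln x) - ln (ln (ln x))) \<le> real m"
proof -
  define y where "y = nat \<lfloor>ln x / ln (ln x)\<rfloor>"
  have "241 \<le> y"
    using assms(2) unfolding y_def by linarith
  then have "real y ^ y \<le> x"
    using floor_ln_div_ln_ln_bounds(1)[OF assms(1) y_def] by simp
  then obtain m where m: "admissible x m" "117/131 * x * ln (real y + 1) \<le> real m"
    using exists_admissible_ln_bound[OF \<open>241 \<le> y\<close>] by blast
  have "x \<ge> 0"
    using assms(1) exp_gt_zero[of "exp 1"] by linarith
  then have "117/131 * x * (ln (ln x) - ln (ln (ln x))) \<le> 117/131 * x * ln (real y + 1)"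
    using floor_ln_div_ln_ln_bounds(2)[OF assms(1) y_def] \<open>241 \<le> y\<close>
    by (intro mult_left_mono) auto
  with m show ?thesis
    by (intro exI[of _ m]) auto
qed

lemma exists_admissible_eventually_bound:
  "\<exists>m. (\<forall>x\<ge>1. admissible x (m x)) \<and>
     (\<forall>\<^sub>F x in at_top. 117/131 * x * (ln (ln x) - ln (ln (ln x))) \<le> real (m x))"
proof -
  have "\<forall>\<^sub>F x in at_top. (242::real) \<le> ln x / ln (ln x)"
    by real_asymp
  moreover have "\<forall>\<^sub>F x in at_top. exp (exp 1) \<le> (x::real)"
    by (rule eventually_ge_at_top)
  ultimately have "\<forall>\<^sub>F x in at_top. 242 \<le> ln x / ln (ln x) \<and> exp (exp 1) \<le> (x::real)"
    by (rule eventually_conj)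
  then obtain X :: real where X: "\<And>x. x \<ge> X \<Longrightarrow> 242 \<le> ln x / ln (ln x) \<and> exp (exp 1) \<le> x"
    unfolding eventually_at_top_linorder by blast
  have "\<exists>k. (x \<ge> 1 \<longrightarrow> admissible x k) \<and>
          (x \<ge> X \<longrightarrow> 117/131 * x * (ln (ln x) - ln (ln (ln x))) \<le> real k)" for x :: real
    using exists_admissible_ln_ln_bound[of x] X[of x] admissible_one[of x] by (cases "x \<ge> X") auto
  then obtain m where m: "\<forall>x. (x \<ge> 1 \<longrightarrow> admissible x (m x)) \<and>
      (x \<ge> X \<longrightarrow> 117/131 * x * (ln (ln x) - ln (ln (ln x))) \<le> real (m x))"
    by (metis choice)
  show ?thesis
  proof (intro exI conjI)
    show "\<forall>x\<ge>1. admissible x (m x)"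
      using m by blast
    show "\<forall>\<^sub>F x in at_top. 117/131 * x * (ln (ln x) - ln (ln (ln x))) \<le> real (m x)"
      using eventually_ge_at_top[of X] by eventually_elim (use m in blast)
  qed
qed

lemma eventually_mult_ln_ln_le:
  fixes a c :: real
  assumes "a < c" "c > 0"
  shows "\<forall>\<^sub>F x in at_top. a * x * ln (ln x) \<le> c * x * (ln (ln x) - ln (ln (ln x)))"
proof -
  define \<delta> where "\<delta> = (c - a) / c"
  have "\<delta> > 0"
    using assms unfolding \<delta>_def by simp
  have "\<forall>\<^sub>F x in at_top. norm (ln (ln (ln x))) \<le> \<delta> * norm (ln (ln (x::real)))"
    by (rule landau_o.smallD[OF _ \<open>\<delta> > 0\<close>]) real_asymp
  moreover have "\<forall>\<^sub>F x in at_top. 0 \<le> ln (ln (x::real))"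
    by real_asymp
  moreover have "\<forall>\<^sub>F x in at_top. 0 \<le> (x::real)"
    by (rule eventually_ge_at_top)
  ultimately show ?thesis
  proof eventually_elim
    case (elim x)
    have "ln (ln (ln x)) \<le> \<delta> * ln (ln x)"
      using elim(1,2) abs_ge_self[of "ln (ln (ln x))"] by (simp add: abs_of_nonneg)
    have "a * x * ln (ln x) = c * x * ((1 - \<delta>) * ln (ln x))"
      using assms(2) unfolding \<delta>_def by (simp add: field_simps)
    also have "\<dots> \<le> c * x * (ln (ln x) - ln (ln (ln x)))"
      using \<open>ln (ln (ln x)) \<le> \<delta> * ln (ln x)\<close> elim(3) assms(2)
      by (intro mult_left_mono) (auto simp: algebra_simps)
    finally show ?case .
  qed
qed

text \<open>\<open>234/131 = 2 * (9/10) * (130/131)\<close> is the constant produced by the construction.\<close>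

lemma exp_euler_mascheroni_less: "exp (euler_mascheroni :: real) < 234/131"
proof -
  have ln2: "ln (2::real) \<ge> 2 * (1/3 + 1/81 + 1/1215)"
    using ln_approx_bounds(1)[of 2 3] by (simp add: eval_nat_numeral)
  have "ln (32::real) = 5 * ln 2"
    by (simp add: ln_powr[symmetric])
  moreover have "euler_mascheroni \<le> harm 31 - ln (32::real) + 1/62"
    using euler_mascheroni_upper[of 30] by simp
  moreover have "harm 31 = (\<Sum>k=1..31. 1 / real k)"
    by (simp add: harm_def inverse_eq_divide)
  moreover have "ln (234/131::real) \<ge> 2 * (103/365 + (103/365)^3/3 + (103/365)^5/5)"
    using ln_approx_bounds(1)[of "234/131" 3] by (simp add: eval_nat_numeral)
  ultimately have "euler_mascheroni < ln (234/131::real)"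
    using ln2 by (simp add: eval_nat_numeral)
  then show ?thesis
    by (metis exp_less_cancel_iff exp_ln zero_less_divide_iff zero_less_numeral)
qed

theorem lemma2:
  shows "\<exists>m :: real \<Rightarrow> nat.
     (\<forall>x \<ge> 1. m x > 0 \<and> real (totient (m x)) \<le> x \<and>
        (\<exists>t Q :: nat. m x = 2 ^ t * Q \<and> odd Q \<and> squarefree Q \<and> Q > 0)) \<and>
     (\<forall>\<epsilon> > 0. eventually
        (\<lambda>x. real (m x) \<ge> (exp euler_mascheroni / 2 - \<epsilon>) * x * ln (ln x)) at_top)"
proof -
  obtain m where adm: "\<forall>x\<ge>1. admissible x (m x)"
    and bound: "\<forall>\<^sub>F x in at_top. 117/131 * x * (ln (ln x) - ln (ln (ln x))) \<le> real (m x)"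
    using exists_admissible_eventually_bound by blast
  have "\<forall>\<epsilon>>0. \<forall>\<^sub>F x in at_top. (exp euler_mascheroni / 2 - \<epsilon>) * x * ln (ln x) \<le> real (m x)"
  proof (intro allI impI)
    fix \<epsilon> :: real
    assume "\<epsilon> > 0"
    then have "exp euler_mascheroni / 2 - \<epsilon> < 117/131"
      using exp_euler_mascheroni_less by simp
    then have "\<forall>\<^sub>F x in at_top. (exp euler_mascheroni / 2 - \<epsilon>) * x * ln (ln x)
        \<le> 117/131 * x * (ln (ln x) - ln (ln (ln x)))"
      by (rule eventually_mult_ln_ln_le) simp
    with bound show "\<forall>\<^sub>F x in at_top. (exp euler_mascheroni / 2 - \<epsilon>) * x * ln (ln x) \<le> real (m x)"
      by eventually_elim (rule order_trans)
  qed
  with adm show ?thesis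
    unfolding admissible_def by blast
qed

end
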